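(* Let $R$ be a reflexive relation on $U$ and $x\in U$. (i) If $x\notin\mathcal S$ and $\{x\}^{\blacktriangle}$ is completely join-irreducible in $\wp(U)^{\blacktriangle}$, then $(\{x\}^{\blacktriangledown},\{x\}^{\blacktriangle})$ is completely join-irreducible in $\mathrm{DM(RS)}$. (ii) If $\{x\}^{\vartriangle}$ is completely join-irreducible in $\wp(U)^{\vartriangle}$, then $(\{x\}^{\vartriangle\blacktriangledown},\{x\}^{\vartriangle\blacktriangle})$ is completely join-irreducible in $\mathrm{DM(RS)}$.
   Context: Let $U$ be a set and $R\subseteq U\times U$ a binary relation. For $x\in U$, $R(x)=\{y\in U\mid (x,y)\in R\}$ and $\breve R(x)=\{y\in U\mid (y,x)\in R\}$. For $X\subseteq U$: $X^{\blacktriangledown}=\{x\in U\mid R(x)\subseteq X\}$, $X^{\blacktriangle}=\{x\in U\mid R(x)\cap X\neq\emptyset\}$, $X^{\triangledown}=\{x\in U\mid \breve R(x)\subseteq X\}$, $X^{\vartriangle}=\{x\in U\mid \breve R(x)\cap X\neq\emptyset\}$; composites like $X^{\vartriangle\blacktriangledown}$ mean $(X^{\vartriangle})^{\blacktriangledown}$. $\wp(U)^{\blacktriangledown}=\{X^{\blacktriangledown}\mid X\subseteq U\}$ and similarly $\wp(U)^{\blacktriangle},\wp(U)^{\vartriangle}$, complete lattices under $\subseteq$ (joins in $\wp(U)^{\blacktriangle},\wp(U)^{\vartriangle}$ are unions). $\mathcal S=\{x\in U\mid |R(x)|=1\}$. $\mathrm{RS}=\{(X^{\blacktriangledown},X^{\blacktriangle})\mid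 X\subseteq U\}$ ordered coordinatewise; $\mathrm{DM(RS)}$ is its Dedekind–MacNeille completion, identified with $\{(A,B)\in\wp(U)^{\blacktriangledown}\times\wp(U)^{\blacktriangle}\mid A^{\vartriangle\blacktriangle}\subseteq B,\ A\cap\mathcal S=B\cap\mathcal S\}$ ordered coordinatewise, with meets $\bigwedge_i(X_i,Y_i)=(\bigcap_iX_i,(\bigcap_iY_i)^{\triangledown\blacktriangle})$ and joins $\bigvee_i(X_i,Y_i)=((\bigcup_iX_i)^{\vartriangle\blacktriangledown},\bigcup_iY_i)$. An element $j$ of a complete lattice $L$ is completely join-irreducible if $j=\bigvee S$ implies $j\in S$ for every $S\subseteq L$. *)

theory Defs
  imports Main
begin

definition Rsucc :: "'a rel \<Rightarrow> 'a \<Rightarrow> 'a set" where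
  "Rsucc R x = {y. (x, y) \<in> R}"

definition Rpred :: "'a rel \<Rightarrow> 'a \<Rightarrow> 'a set" where
  "Rpred R x = {y. (y, x) \<in> R}"

definition bdown :: "'a rel \<Rightarrow> 'a set \<Rightarrow> 'a set" where
  "bdown R X = {x. Rsucc R x \<subseteq> X}"

definition bup :: "'a rel \<Rightarrow> 'a set \<Rightarrow> 'a set" where
  "bup R X = {x. Rsucc R x \<inter> X \<noteq> {}}"

definition wdown :: "'a rel \<Rightarrow> 'a set \<Rightarrow> 'a set" where
  "wdown R X = {x. Rpred R x \<subseteq> X}"

definition wup :: "'a rel \<Rightarrow> 'a set \<Rightarrow> 'a set" where
  "wup R X = {x. Rpred R x \<inter> X \<noteq> {}}"

definition singS :: "'a rel \<Rightarrow> 'a set" where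
  "singS R = {x. card (Rsucc R x) = 1}"

definition DMRS :: "'a rel \<Rightarrow> ('a set \<times> 'a set) set" where
  "DMRS R = {(A, B). A \<in> range (bdown R) \<and> B \<in> range (bup R)
      \<and> bup R (wup R A) \<subseteq> B \<and> A \<inter> singS R = B \<inter> singS R}"

definition pair_le :: "'a set \<times> 'a set \<Rightarrow> 'a set \<times> 'a set \<Rightarrow> bool" where
  "pair_le p q \<longleftrightarrow> fst p \<subseteq> fst q \<and> snd p \<subseteq> snd q"

definition is_join_in :: "'b set \<Rightarrow> ('b \<Rightarrow> 'b \<Rightarrow> bool) \<Rightarrow> 'b set \<Rightarrow> 'b \<Rightarrow> bool" where
  "is_join_in L le S j \<longleftrightarrow> j \<in> L \<and> (\<forall>s\<in>S. le s j) \<and>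
      (\<forall>u\<in>L. (\<forall>s\<in>S. le s u) \<longrightarrow> le j u)"

definition cji_in :: "'b set \<Rightarrow> ('b \<Rightarrow> 'b \<Rightarrow> bool) \<Rightarrow> 'b \<Rightarrow> bool" where
  "cji_in L le j \<longleftrightarrow> j \<in> L \<and> (\<forall>S\<subseteq>L. is_join_in L le S j \<longrightarrow> j \<in> S)"

end

theory Submission
  imports Defs
begin

text \<open>Joins in DM(RS) are given by \<open>\<Or>(X\<^sub>i, Y\<^sub>i) = ((\<Union>X\<^sub>i)\<^sup>\<vartriangle>\<^sup>\<blacktriangledown>, \<Union>Y\<^sub>i)\<close>.
  If the pair built from \<open>{x}\<close> is such a join, then in (i) \<open>{x}\<^sup>\<blacktriangle>\<close> is
  the union of the \<open>Y\<^sub>i\<close>, and in (ii), because \<open>\<vartriangle>\<close> is left adjoint to \<open>\<blacktriangledown>\<close>, \<open>{x}\<^sup>\<vartriangle>\<close>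
  is the union of the \<open>X\<^sub>i\<^sup>\<vartriangle>\<close>. Complete join-irreducibility in \<open>\<wp>(U)\<^sup>\<blacktriangle>\<close> resp.
  \<open>\<wp>(U)\<^sup>\<vartriangle>\<close> yields an index \<open>i\<close> attaining the union, and \<open>(X\<^sub>i, Y\<^sub>i)\<close> is then the
  given pair: in (i) because \<open>{x}\<^sup>\<blacktriangledown> = \<emptyset>\<close> when \<open>R\<close> is reflexive and \<open>x\<close> is not in
  \<open>\<S>\<close>, in (ii) again by the adjunction.\<close>

lemma bup_mono: "X \<subseteq> Y \<Longrightarrow> bup R X \<subseteq> bup R Y"
  by (auto simp: bup_def)

lemma bdown_mono: "X \<subseteq> Y \<Longrightarrow> bdown R X \<subseteq> bdown R Y"
  by (auto simp: bdown_def)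

lemma bup_Union: "bup R (\<Union>As) = \<Union>(bup R ` As)"
  by (auto simp: bup_def)

lemma wup_Union: "wup R (\<Union>As) = \<Union>(wup R ` As)"
  by (auto simp: wup_def)

lemma wup_bdown_subset: "wup R (bdown R X) \<subseteq> X"
  by (auto simp: wup_def bdown_def Rpred_def Rsucc_def)

lemma subset_bdown_wup: "X \<subseteq> bdown R (wup R X)"
  by (auto simp: wup_def bdown_def Rpred_def Rsucc_def)

lemma wup_iff_bdown: "wup R X \<subseteq> Y \<longleftrightarrow> X \<subseteq> bdown R Y"
  by (auto simp: wup_def bdown_def Rpred_def Rsucc_def)

lemma Union_range_bup: "Bs \<subseteq> range (bup R) \<Longrightarrow> \<Union>Bs \<in> range (bup R)"
proof -
  assume "Bs \<subseteq> range (bup R)"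
  then have "Bs = bup R ` {Y. bup R Y \<in> Bs}" by blast
  then have "\<Union>Bs = bup R (\<Union>{Y. bup R Y \<in> Bs})" by (metis bup_Union)
  then show ?thesis by simp
qed

lemma singS_iff: "y \<in> singS R \<longleftrightarrow> (\<exists>z. Rsucc R y = {z})"
  by (simp add: singS_def card_1_singleton_iff)

lemma bdown_Int_singS: "bdown R X \<inter> singS R = bup R X \<inter> singS R"
  by (auto simp: singS_iff bdown_def bup_def)

lemma bdown_singleton_empty:
  assumes "refl R" and "x \<notin> singS R"
  shows "bdown R {x} = {}"
proof (rule ccontr)
  assume "bdown R {x} \<noteq> {}"
  then obtain y where "Rsucc R y \<subseteq> {x}" by (auto simp: bdown_def)
  moreover have "y \<in> Rsucc R y" using \<open>refl R\<close> by (simp add: Rsucc_def refl_on_def)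
  ultimately have "Rsucc R x = {x}" by auto
  with \<open>x \<notin> singS R\<close> show False by (simp add: singS_iff)
qed

lemma DMRS_memD:
  assumes "s \<in> DMRS R"
  shows "fst s \<in> range (bdown R)" "snd s \<in> range (bup R)"
    "bup R (wup R (fst s)) \<subseteq> snd s" "fst s \<inter> singS R = snd s \<inter> singS R"
  using assms by (cases s, simp add: DMRS_def)+

lemma RS_in_DMRS: "(bdown R X, bup R X) \<in> DMRS R"
  using bup_mono[OF wup_bdown_subset, of R R X] bdown_Int_singS[of R X] by (auto simp: DMRS_def)

lemma is_join_in_Union: "\<Union>Bs \<in> L \<Longrightarrow> is_join_in L (\<subseteq>) Bs (\<Union>Bs)"
  by (auto simp: is_join_in_def)

definition DMRS_Sup :: "'a rel \<Rightarrow> ('a set \<times> 'a set) set \<Rightarrow> 'a set \<times> 'a set" where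
  "DMRS_Sup R Ss = (bdown R (wup R (\<Union>(fst ` Ss))), \<Union>(snd ` Ss))"

lemma DMRS_Sup_upper: "s \<in> Ss \<Longrightarrow> pair_le s (DMRS_Sup R Ss)"
  using subset_bdown_wup[of "\<Union>(fst ` Ss)" R]
  by (auto simp: pair_le_def DMRS_Sup_def)

lemma DMRS_Sup_in_DMRS:
  assumes Ss: "Ss \<subseteq> DMRS R"
  shows "DMRS_Sup R Ss \<in> DMRS R"
proof -
  define F where "F = \<Union>(fst ` Ss)"
  define B where "B = \<Union>(snd ` Ss)"
  note member = DMRS_memD[OF subsetD[OF Ss]]
  have B_range: "B \<in> range (bup R)"
    unfolding B_def using member(2) by (intro Union_range_bup) blast
  have "bup R (wup R F) = (\<Union>s\<in>Ss. bup R (wup R (fst s)))"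
    by (simp add: F_def wup_Union bup_Union image_image)
  also have "\<dots> \<subseteq> B"
    using member(3) unfolding B_def by blast
  finally have bup_wup_F: "bup R (wup R F) \<subseteq> B" .
  have "bup R (wup R (bdown R (wup R F))) \<subseteq> B"
    using bup_mono[OF wup_bdown_subset, of R R "wup R F"] bup_wup_F by (rule order_trans)
  moreover have "bdown R (wup R F) \<inter> singS R = B \<inter> singS R"
  proof
    show "bdown R (wup R F) \<inter> singS R \<subseteq> B \<inter> singS R"
      using bup_wup_F bdown_Int_singS[of R "wup R F"] by blast
    have "fst s \<subseteq> bdown R (wup R F)" if "s \<in> Ss" for s
      using that subset_bdown_wup[of F R] unfolding F_def by blast
    then show "B \<inter> singS R \<subseteq> bdown R (wup R F) \<inter> singS R"
      using member(4) unfolding B_def by blast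
  qed
  ultimately show ?thesis
    using B_range unfolding DMRS_Sup_def F_def[symmetric] B_def[symmetric] DMRS_def by blast
qed

lemma is_join_in_DMRS_imp_eq_Sup:
  assumes Ss: "Ss \<subseteq> DMRS R" and join: "is_join_in (DMRS R) pair_le Ss (A, B)"
  shows "(A, B) = DMRS_Sup R Ss"
proof -
  have "pair_le (A, B) (DMRS_Sup R Ss)"
    using join DMRS_Sup_in_DMRS[OF Ss] DMRS_Sup_upper[of _ Ss R] unfolding is_join_in_def by blast
  moreover have "pair_le (DMRS_Sup R Ss) (A, B)"
  proof -
    have "(A, B) \<in> DMRS R"
      using join by (simp add: is_join_in_def)
    then obtain Y where A: "A = bdown R Y"
      using DMRS_memD(1) by fastforce
    have upper: "fst s \<subseteq> A" "snd s \<subseteq> B" if "s \<in> Ss" for s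
      using join that by (auto simp: is_join_in_def pair_le_def)
    then have "wup R (\<Union>(fst ` Ss)) \<subseteq> Y"
      unfolding wup_iff_bdown A by blast
    then have "bdown R (wup R (\<Union>(fst ` Ss))) \<subseteq> A"
      unfolding A by (rule bdown_mono)
    then show ?thesis
      using upper(2) by (auto simp: pair_le_def DMRS_Sup_def)
  qed
  ultimately show ?thesis
    by (auto simp: pair_le_def)
qed

lemma cji_DMRS_if_bdown_empty:
  assumes empty: "bdown R X = {}" and cji: "cji_in (range (bup R)) (\<subseteq>) (bup R X)"
  shows "cji_in (DMRS R) pair_le (bdown R X, bup R X)"
  unfolding cji_in_def
proof (intro conjI allI impI RS_in_DMRS)
  fix Ss assume Ss: "Ss \<subseteq> DMRS R"
    and join: "is_join_in (DMRS R) pair_le Ss (bdown R X, bup R X)"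
  have snd_range: "snd ` Ss \<subseteq> range (bup R)"
    using DMRS_memD(2)[OF subsetD[OF Ss]] by blast
  have "bup R X = \<Union>(snd ` Ss)"
    using is_join_in_DMRS_imp_eq_Sup[OF Ss join] by (simp add: DMRS_Sup_def)
  then have "is_join_in (range (bup R)) (\<subseteq>) (snd ` Ss) (bup R X)"
    by (metis is_join_in_Union rangeI)
  then obtain s where s: "s \<in> Ss" "snd s = bup R X"
    using cji snd_range by (auto simp: cji_in_def)
  moreover have "fst s = {}"
    using join s(1) empty by (auto simp: is_join_in_def pair_le_def)
  ultimately show "(bdown R X, bup R X) \<in> Ss"
    using empty by (metis prod.collapse)
qed

lemma cji_DMRS_wup:
  assumes cji: "cji_in (range (wup R)) (\<subseteq>) (wup R X)"
  shows "cji_in (DMRS R) pair_le (bdown R (wup R X), bup R (wup R X))"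
  unfolding cji_in_def
proof (intro conjI allI impI RS_in_DMRS)
  define W where "W = wup R X"
  fix Ss assume Ss: "Ss \<subseteq> DMRS R"
    and "is_join_in (DMRS R) pair_le Ss (bdown R (wup R X), bup R (wup R X))"
  then have join: "is_join_in (DMRS R) pair_le Ss (bdown R W, bup R W)"
    by (simp add: W_def)
  note member = DMRS_memD[OF subsetD[OF Ss]]
  have upper: "fst s \<subseteq> bdown R W" "snd s \<subseteq> bup R W" if "s \<in> Ss" for s
    using join that by (auto simp: is_join_in_def pair_le_def)
  have "bdown R W = bdown R (wup R (\<Union>(fst ` Ss)))"
    using is_join_in_DMRS_imp_eq_Sup[OF Ss join] by (simp add: DMRS_Sup_def)
  then have "X \<subseteq> bdown R (wup R (\<Union>(fst ` Ss)))"
    using subset_bdown_wup[of X R] unfolding W_def by simp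
  then have "W \<subseteq> wup R (\<Union>(fst ` Ss))"
    unfolding W_def wup_iff_bdown .
  moreover have "wup R (fst s) \<subseteq> W" if "s \<in> Ss" for s
    unfolding wup_iff_bdown by (rule upper(1)[OF that])
  ultimately have "W = \<Union>(wup R ` fst ` Ss)"
    by (auto simp: wup_Union)
  then have "is_join_in (range (wup R)) (\<subseteq>) (wup R ` fst ` Ss) W"
    by (metis is_join_in_Union W_def rangeI)
  moreover have "wup R ` fst ` Ss \<subseteq> range (wup R)"
    by blast
  ultimately have "W \<in> wup R ` fst ` Ss"
    using cji unfolding cji_in_def W_def by (elim conjE allE impE)
  then obtain s where s: "s \<in> Ss" "wup R (fst s) = W"
    by blast
  obtain Y where Y: "fst s = bdown R Y"
    using member(1)[OF s(1)] by blast
  have "bdown R W \<subseteq> fst s"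
    using bdown_mono[OF wup_bdown_subset[of R Y]] s(2) Y by simp
  moreover have "bup R W \<subseteq> snd s"
    using member(3)[OF s(1)] s(2) by simp
  ultimately have "s = (bdown R W, bup R W)"
    using upper[OF s(1)] by (simp add: prod_eq_iff)
  then show "(bdown R (wup R X), bup R (wup R X)) \<in> Ss"
    using s(1) by (simp add: W_def)
qed

theorem mainTheorem13:
  fixes R :: "'a rel" and x :: 'a
  assumes "refl R"
  shows "(x \<notin> singS R \<and> cji_in (range (bup R)) (\<subseteq>) (bup R {x})
            \<longrightarrow> cji_in (DMRS R) pair_le (bdown R {x}, bup R {x}))
       \<and> (cji_in (range (wup R)) (\<subseteq>) (wup R {x})
            \<longrightarrow> cji_in (DMRS R) pair_le (bdown R (wup R {x}), bup R (wup R {x})))"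
proof (intro conjI impI)
  assume "x \<notin> singS R \<and> cji_in (range (bup R)) (\<subseteq>) (bup R {x})"
  then show "cji_in (DMRS R) pair_le (bdown R {x}, bup R {x})"
    using cji_DMRS_if_bdown_empty bdown_singleton_empty[OF assms] by metis
next
  assume "cji_in (range (wup R)) (\<subseteq>) (wup R {x})"
  then show "cji_in (DMRS R) pair_le (bdown R (wup R {x}), bup R (wup R {x}))"
    by (rule cji_DMRS_wup)
qed

end
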